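(* Let $G$ be a finite simple undirected graph and let $F$ be a rooted forest on vertex set $V(G)$, given by parent pointers, all of whose edges are edges of $G$. Let $u$ be the root of one tree of $F$. Run the following procedure. Initialize a set $S=\{u\}$ and a FIFO queue $Q$ containing only $u$. While $Q$ is nonempty: pop a vertex $x$ from $Q$, and for each neighbor $y$ of $x$ in $G$: if $y=\mathrm{parent}(x)$, skip $y$; else if $\mathrm{parent}(y)=x$, push $y$ onto $Q$ and add $y$ to $S$; otherwise set $\mathit{succ}=\mathrm{true}$ and scan the vertices $w=y,\ \mathrm{parent}(y),\ \mathrm{parent}(\mathrm{parent}(y)),\dots$ up to and including the root of the tree of $F$ containing $y$, where for each scanned $w$: if $w\in S$, set $\mathit{succ}=\mathrm{false}$ and stop the scan, else add $w$ to $S$; if after the scan $\mathit{succ}=\mathrm{true}$, the whole procedure stops and reports success (the edge $(x,y)$ being a replacement edge). If the queue becomes empty without success being reported, the procedure terminates reporting failure. Then, if the procedure terminates reporting failure, $S$ is exactly the set of vertices of the tree of $F$ rooted at $u$.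
   Context: In the paper this procedure is the search for a replacement edge after a tree edge has been deleted from a spanning forest maintained by parent pointers; $u$ is the root of the subtree in which the search is performed. *)

theory Defs
  imports Main
begin

text \<open>Parent-pointer forest: par v = Some p means p is the parent of v; par v = None means v is a root.
  The parent relation (child, parent):\<close>
definition parent_rel :: "('a \<Rightarrow> 'a option) \<Rightarrow> ('a \<times> 'a) set" where
  "parent_rel par = {(v, p). par v = Some p}"

definition tree_of :: "('a \<Rightarrow> 'a option) \<Rightarrow> 'a \<Rightarrow> 'a set" where
  "tree_of par u = {v. (v, u) \<in> (parent_rel par)\<^sup>*}"

text \<open>The ancestor scan: scan par S w S' succ means scanning w, parent w, ... up to the root,
  starting with set S, ends with set S' and flag succ.\<close>
inductive scan :: "('a \<Rightarrow> 'a option) \<Rightarrow> 'a set \<Rightarrow> 'a \<Rightarrow> 'a set \<Rightarrow> bool \<Rightarrow> bool"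
  for par where
  scan_hit: "w \<in> S \<Longrightarrow> scan par S w S False"
| scan_root: "w \<notin> S \<Longrightarrow> par w = None \<Longrightarrow> scan par S w (insert w S) True"
| scan_up: "w \<notin> S \<Longrightarrow> par w = Some p \<Longrightarrow> scan par (insert w S) p S' b \<Longrightarrow> scan par S w S' b"

text \<open>Processing the neighbour list ys of the popped vertex x with current set S and queue Q.
  Result None = success reported; Some (S', Q') = all neighbours processed without success.\<close>
inductive process_nbrs :: "('a \<Rightarrow> 'a option) \<Rightarrow> 'a \<Rightarrow> 'a list \<Rightarrow> 'a set \<Rightarrow> 'a list
    \<Rightarrow> ('a set \<times> 'a list) option \<Rightarrow> bool"
  for par x where
  pn_nil: "process_nbrs par x [] S Q (Some (S, Q))"
| pn_parent: "par x = Some y \<Longrightarrow> process_nbrs par x ys S Q r \<Longrightarrow> process_nbrs par x (y # ys) S Q r"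
| pn_child: "par x \<noteq> Some y \<Longrightarrow> par y = Some x \<Longrightarrow>
    process_nbrs par x ys (insert y S) (Q @ [y]) r \<Longrightarrow> process_nbrs par x (y # ys) S Q r"
| pn_scan_fail: "par x \<noteq> Some y \<Longrightarrow> par y \<noteq> Some x \<Longrightarrow> scan par S y S' False \<Longrightarrow>
    process_nbrs par x ys S' Q r \<Longrightarrow> process_nbrs par x (y # ys) S Q r"
| pn_success: "par x \<noteq> Some y \<Longrightarrow> par y \<noteq> Some x \<Longrightarrow> scan par S y S' True \<Longrightarrow>
    process_nbrs par x (y # ys) S Q None"

text \<open>Main loop with FIFO queue (list, popped from the front, pushed at the back).
  Result None = success reported; Some S = failure reported with final set S.\<close>
inductive search_loop :: "('a \<Rightarrow> 'a option) \<Rightarrow> ('a \<Rightarrow> 'a list) \<Rightarrow> 'a set \<Rightarrow> 'a list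
    \<Rightarrow> 'a set option \<Rightarrow> bool"
  for par nbrs where
  loop_empty: "search_loop par nbrs S [] (Some S)"
| loop_cont: "process_nbrs par x (nbrs x) S Q (Some (S', Q')) \<Longrightarrow> search_loop par nbrs S' Q' r \<Longrightarrow>
    search_loop par nbrs S (x # Q) r"
| loop_success: "process_nbrs par x (nbrs x) S Q None \<Longrightarrow> search_loop par nbrs S (x # Q) None"

definition replacement_search :: "('a \<Rightarrow> 'a option) \<Rightarrow> ('a \<Rightarrow> 'a list) \<Rightarrow> 'a \<Rightarrow> 'a set option \<Rightarrow> bool" where
  "replacement_search par nbrs u r \<longleftrightarrow> search_loop par nbrs {u} [u] r"

end

theory Submission
  imports Defs
begin

text \<open>Soundness: a vertex set containing, with every vertex, its parent and its children
  (a union of trees of the forest) is never left by the search. Children of a vertex stay in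
  its tree, and a failing scan from y runs into the current set, so y lies below a vertex of
  that set and everything the scan adds is an ancestor of y. Acyclicity is what guarantees
  that the scan stops at an old vertex rather than at one it inserted itself.

  Completeness: every queued vertex is eventually popped, and then all of its children are
  added and queued, since each is a neighbour (forest edges are graph edges) and not the
  parent (there are no 2-cycles). Hence all descendants of u end up in the final set.\<close>

lemma in_parent_rel [simp]: "(x, p) \<in> parent_rel par \<longleftrightarrow> par x = Some p"
  by (simp add: parent_rel_def)

lemma acyclic_parent_rel_no_2cycle:
  assumes "acyclic (parent_rel par)" and "par c = Some x"
  shows "par x \<noteq> Some c"
proof
  assume "par x = Some c"
  with assms(2) have "(c, c) \<in> (parent_rel par)\<^sup>+"
    by (meson in_parent_rel trancl.r_into_trancl trancl_into_trancl)
  with assms(1) show False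
    by (simp add: acyclic_def)
qed

definition union_of_trees :: "('a \<Rightarrow> 'a option) \<Rightarrow> 'a set \<Rightarrow> bool" where
  "union_of_trees par T \<longleftrightarrow> (\<forall>x p. par x = Some p \<longrightarrow> (x \<in> T \<longleftrightarrow> p \<in> T))"

lemma union_of_trees_rtrancl:
  assumes "union_of_trees par T" and "(x, y) \<in> (parent_rel par)\<^sup>*"
  shows "x \<in> T \<longleftrightarrow> y \<in> T"
  using assms(2) by induction (use assms(1) in \<open>auto simp: union_of_trees_def\<close>)

lemma union_of_trees_tree_of:
  assumes "par u = None"
  shows "union_of_trees par (tree_of par u)"
  unfolding union_of_trees_def
proof (intro allI impI)
  fix x p assume x_p: "par x = Some p"
  show "x \<in> tree_of par u \<longleftrightarrow> p \<in> tree_of par u"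
  proof
    assume "x \<in> tree_of par u"
    then have "(x, u) \<in> (parent_rel par)\<^sup>*"
      by (simp add: tree_of_def)
    moreover have "x \<noteq> u"
      using x_p assms by auto
    ultimately show "p \<in> tree_of par u"
      using x_p by (auto simp: tree_of_def elim: converse_rtranclE)
  next
    assume "p \<in> tree_of par u"
    then show "x \<in> tree_of par u"
      using x_p by (auto simp: tree_of_def intro: converse_rtrancl_into_rtrancl)
  qed
qed

lemma scan_mono: "scan par S w S' b \<Longrightarrow> S \<subseteq> S'"
  by (induction rule: scan.induct) auto

lemma scan_subset_ancestors:
  "scan par S w S' b \<Longrightarrow> S' \<subseteq> S \<union> {v. (w, v) \<in> (parent_rel par)\<^sup>*}"
proof (induction rule: scan.induct)
  case (scan_up w S p S' b)
  then have "{v. (p, v) \<in> (parent_rel par)\<^sup>*} \<subseteq> {v. (w, v) \<in> (parent_rel par)\<^sup>*}"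
    by (auto intro: converse_rtrancl_into_rtrancl)
  with scan_up.IH show ?case
    by auto
qed auto

lemma scan_False_meets:
  assumes "scan par S w S' False" and "acyclic (parent_rel par)"
  shows "\<exists>v\<in>S. (w, v) \<in> (parent_rel par)\<^sup>*"
  using assms(1)
proof (induction S w S' "False" rule: scan.induct)
  case (scan_up w S p S')
  then obtain v where v: "v \<in> insert w S" and p_v: "(p, v) \<in> (parent_rel par)\<^sup>*"
    by blast
  have w_p: "(w, p) \<in> parent_rel par"
    using scan_up.hyps(2) by simp
  have "v \<noteq> w"
  proof
    assume "v = w"
    with w_p p_v have "(w, w) \<in> (parent_rel par)\<^sup>+"
      by (simp add: rtrancl_into_trancl2)
    with assms(2) show False
      by (simp add: acyclic_def)
  qed
  with v show ?case
    using converse_rtrancl_into_rtrancl[OF w_p p_v] by blast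
qed auto

lemma scan_False_within:
  assumes "scan par S w S' False" and "acyclic (parent_rel par)"
    and "union_of_trees par T" and "S \<subseteq> T"
  shows "S' \<subseteq> T"
proof -
  obtain v where "v \<in> S" and w_v: "(w, v) \<in> (parent_rel par)\<^sup>*"
    using scan_False_meets[OF assms(1,2)] by blast
  then have "w \<in> T"
    using union_of_trees_rtrancl[OF assms(3) w_v] assms(4) by blast
  then have "{v. (w, v) \<in> (parent_rel par)\<^sup>*} \<subseteq> T"
    using union_of_trees_rtrancl[OF assms(3)] by blast
  then show ?thesis
    using scan_subset_ancestors[OF assms(1)] assms(4) by blast
qed

lemma process_nbrs_within:
  assumes "process_nbrs par x ys S Q (Some (S1, Q1))" and "acyclic (parent_rel par)"
    and "union_of_trees par T" and "x \<in> T" and "S \<union> set Q \<subseteq> T"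
  shows "S1 \<union> set Q1 \<subseteq> T"
  using assms(1,5)
proof (induction ys S Q "Some (S1, Q1)" rule: process_nbrs.induct)
  case (pn_child y ys S Q)
  then have "y \<in> T"
    using assms(3,4) by (auto simp: union_of_trees_def)
  with pn_child show ?case
    by auto
next
  case (pn_scan_fail y S S' ys Q)
  then have "S' \<subseteq> T"
    using scan_False_within[OF pn_scan_fail.hyps(3) assms(2,3)] by simp
  with pn_scan_fail show ?case
    by simp
qed auto

lemma search_loop_within:
  assumes "search_loop par nbrs S Q (Some S')" and "acyclic (parent_rel par)"
    and "union_of_trees par T" and "S \<union> set Q \<subseteq> T"
  shows "S' \<subseteq> T"
  using assms(1,4)
proof (induction S Q "Some S'" rule: search_loop.induct)
  case (loop_cont x S Q S1 Q1)
  then show ?case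
    using process_nbrs_within[OF loop_cont.hyps(1) assms(2,3)] by auto
qed auto

lemma process_nbrs_collects_children:
  assumes "process_nbrs par x ys S Q (Some (S1, Q1))" and "acyclic (parent_rel par)"
  shows "S \<subseteq> S1 \<and> set Q \<subseteq> set Q1 \<and> (\<forall>c\<in>set ys. par c = Some x \<longrightarrow> c \<in> S1 \<and> c \<in> set Q1)"
  using assms(1)
proof (induction ys S Q "Some (S1, Q1)" rule: process_nbrs.induct)
  case (pn_parent y ys S Q)
  then show ?case
    using acyclic_parent_rel_no_2cycle[OF assms(2)] by auto
next
  case (pn_scan_fail y S S' ys Q)
  then show ?case
    using scan_mono by fastforce
qed auto

lemma search_loop_collects_descendants:
  assumes "search_loop par nbrs S Q (Some S')" and "acyclic (parent_rel par)"
    and children: "\<And>x c. par c = Some x \<Longrightarrow> c \<in> set (nbrs x)"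
  shows "S \<subseteq> S' \<and> (\<forall>x\<in>set Q. \<forall>c. (c, x) \<in> (parent_rel par)\<^sup>+ \<longrightarrow> c \<in> S')"
  using assms(1)
proof (induction S Q "Some S'" rule: search_loop.induct)
  case (loop_cont x S Q S1 Q1)
  have S_S1: "S \<subseteq> S1" and Q_Q1: "set Q \<subseteq> set Q1"
    and child_x: "\<And>c. par c = Some x \<Longrightarrow> c \<in> S1 \<and> c \<in> set Q1"
    using process_nbrs_collects_children[OF loop_cont.hyps(1) assms(2)] children by auto
  have S1_S': "S1 \<subseteq> S'"
    and Q1_desc: "\<And>x c. x \<in> set Q1 \<Longrightarrow> (c, x) \<in> (parent_rel par)\<^sup>+ \<Longrightarrow> c \<in> S'"
    using loop_cont.hyps(3) by auto
  have "c \<in> S'" if "(c, x) \<in> (parent_rel par)\<^sup>+" for c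
    using that by (cases rule: tranclE) (use child_x S1_S' Q1_desc in auto)
  with S_S1 Q_Q1 S1_S' Q1_desc show ?case
    by auto
qed auto

theorem lemma7:
  fixes V :: "'a set" and E :: "('a \<times> 'a) set"
    and nbrs :: "'a \<Rightarrow> 'a list" and par :: "'a \<Rightarrow> 'a option" and u :: 'a and S :: "'a set"
  assumes finV: "finite V"
    and E_sub: "E \<subseteq> V \<times> V"
    and E_sym: "sym E"
    and E_irrefl: "irrefl E"
    and nbrs_set: "\<And>x. x \<in> V \<Longrightarrow> set (nbrs x) = {y. (x, y) \<in> E}"
    and nbrs_dist: "\<And>x. x \<in> V \<Longrightarrow> distinct (nbrs x)"
    and par_edges: "\<And>x p. par x = Some p \<Longrightarrow> x \<in> V \<and> (x, p) \<in> E"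
    and forest: "acyclic (parent_rel par)"
    and u_V: "u \<in> V"
    and u_root: "par u = None"
    and fail: "replacement_search par nbrs u (Some S)"
  shows "S = tree_of par u"
proof
  have loop: "search_loop par nbrs {u} [u] (Some S)"
    using fail by (simp add: replacement_search_def)
  have "u \<in> tree_of par u"
    by (simp add: tree_of_def)
  moreover have "union_of_trees par (tree_of par u)"
    using u_root by (rule union_of_trees_tree_of)
  ultimately show "S \<subseteq> tree_of par u"
    using search_loop_within[OF loop forest] by simp
  have children: "c \<in> set (nbrs x)" if "par c = Some x" for x c
  proof -
    have "(x, c) \<in> E"
      using par_edges[OF that] E_sym by (meson symD)
    with E_sub nbrs_set show ?thesis
      by auto
  qed
  have "u \<in> S \<and> (\<forall>c. (c, u) \<in> (parent_rel par)\<^sup>+ \<longrightarrow> c \<in> S)"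
    using search_loop_collects_descendants[OF loop forest children] by simp
  then show "tree_of par u \<subseteq> S"
    by (auto simp: tree_of_def rtrancl_eq_or_trancl)
qed

end
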